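(* Suppose (i) the initial sketch $P$ provided by the user satisfies $P\xRightarrow{*}\bar{P}^*$, and (ii) the user responses are $\mathcal{O}(Q)=\mathbb{I}[Q\xRightarrow{*}\bar{P}^*]$. Then, if the interactive synthesis algorithm terminates, it returns $\bar{P}^*$.
   Context: Setting: a DSL of database queries given by a context-free grammar with select, project and inner-join operations; holes are either tables in a sequence of inner-joins (nonterminal $I$) or columns (nonterminal $C$). A sketch is a sequence derivable from the start symbol; $\alpha\xRightarrow{*}\alpha'$ means $\alpha'$ is derivable from $\alpha$ (i.e., $\alpha'$ is a refinement of $\alpha$); a completion is a refinement with no holes. $\bar{P}^*$ denotes the true (user-intended) complete program. The interactive synthesis algorithm keeps a current sketch $P$ (initialized to the user's sketch) and a set $\mathcal{N}$ of rejected questions; while $P$ has holes, it forms candidate questions (refinements of $P$ obtained by filling one hole, and all holes sharing its name, with either a column $c_i$, a table $t_i$, or $t_i\Join_{C,C}I$), removes those in $\mathcal{N}$, picks one question $\hat Q$ (via sampled completions), asks the user oracle $\mathcal{O}(\hat Q)\in\{\mathsf{true},\mathsf{false}\}$, and sets $P\gets\hat Q$ if true, else adds $\hat Q$ to $\mathcal{N}$. It returns $P$ once $P$ is complete. $\mathbb{I}$ is the indicator function. *)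

theory Defs
  imports Main
begin

datatype ('t, 'n) gsym = Tm 't | NT 'n

(* Sketch symbols: terminals, or holes = nonterminal occurrences carrying a hole name. *)
datatype ('t, 'n, 'h) ssym = STm 't | Hole 'n 'h

type_synonym ('t, 'n, 'h) sketch = "('t, 'n, 'h) ssym list"

(* a grammar symbol on a production's right-hand side is instantiated by a sketch symbol;
   fresh nonterminals may receive any hole name *)
fun inst_sym :: "('t, 'n) gsym \<Rightarrow> ('t, 'n, 'h) ssym \<Rightarrow> bool" where
  "inst_sym (Tm a) s = (s = STm a)"
| "inst_sym (NT A) s = (\<exists>h. s = Hole A h)"

inductive derive1 :: "('n \<times> ('t, 'n) gsym list) set \<Rightarrow> ('t, 'n, 'h) sketch \<Rightarrow> ('t, 'n, 'h) sketch \<Rightarrow> bool"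
  for G where
  "(A, rhs) \<in> G \<Longrightarrow> list_all2 inst_sym rhs r \<Longrightarrow> derive1 G (xs @ Hole A h # ys) (xs @ r @ ys)"

(* alpha =>* alpha' : alpha' is a refinement of alpha *)
abbreviation derives :: "('n \<times> ('t, 'n) gsym list) set \<Rightarrow> ('t, 'n, 'h) sketch \<Rightarrow> ('t, 'n, 'h) sketch \<Rightarrow> bool"
  where "derives G \<equiv> (derive1 G)\<^sup>*\<^sup>*"

definition complete :: "('t, 'n, 'h) sketch \<Rightarrow> bool" where
  "complete P \<longleftrightarrow> (\<forall>s\<in>set P. \<exists>a. s = STm a)"

definition hole_names :: "('t, 'n, 'h) sketch \<Rightarrow> 'h set" where
  "hole_names P = {h. \<exists>A. Hole A h \<in> set P}"

definition fill :: "('t, 'n, 'h) sketch \<Rightarrow> 'n \<Rightarrow> 'h \<Rightarrow> ('t, 'n, 'h) sketch \<Rightarrow> ('t, 'n, 'h) sketch" where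
  "fill P A h r = concat (map (\<lambda>s. if s = Hole A h then r else [s]) P)"

(* right-hand side  t |><|_{C,C} I  *)
definition join_rhs :: "'t \<Rightarrow> 't \<Rightarrow> 'n \<Rightarrow> 'n \<Rightarrow> ('t, 'n) gsym list" where
  "join_rhs jn t I C = [Tm t, Tm jn, NT C, NT C, NT I]"

definition questions :: "'n \<Rightarrow> 'n \<Rightarrow> 't set \<Rightarrow> 't set \<Rightarrow> 't \<Rightarrow> ('t, 'n, 'h) sketch \<Rightarrow> ('t, 'n, 'h) sketch set" where
  "questions I C cols tabs jn P =
     {fill P A h r | A h r. Hole A h \<in> set P \<and>
        ((A = C \<and> (\<exists>c\<in>cols. r = [STm c])) \<or>
         (A = I \<and> ((\<exists>t\<in>tabs. r = [STm t]) \<or>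
                    (\<exists>t\<in>tabs. \<exists>h1 h2 h3. distinct [h1, h2, h3] \<and>
                        h1 \<notin> hole_names P \<and> h2 \<notin> hole_names P \<and> h3 \<notin> hole_names P \<and>
                        r = [STm t, STm jn, Hole C h1, Hole C h2, Hole I h3]))))}"

(* one iteration of the interactive loop on state (P, N); the chosen question is arbitrary
   among the candidates not in N (covers any selection strategy, incl. sampling-based) *)
inductive synth_step :: "'n \<Rightarrow> 'n \<Rightarrow> 't set \<Rightarrow> 't set \<Rightarrow> 't \<Rightarrow> (('t, 'n, 'h) sketch \<Rightarrow> bool)
    \<Rightarrow> ('t, 'n, 'h) sketch \<times> ('t, 'n, 'h) sketch set \<Rightarrow> ('t, 'n, 'h) sketch \<times> ('t, 'n, 'h) sketch set \<Rightarrow> bool"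
  for I C cols tabs jn Orc where
  accept: "\<not> complete P \<Longrightarrow> Q \<in> questions I C cols tabs jn P - N \<Longrightarrow> Orc Q
     \<Longrightarrow> synth_step I C cols tabs jn Orc (P, N) (Q, N)"
| reject: "\<not> complete P \<Longrightarrow> Q \<in> questions I C cols tabs jn P - N \<Longrightarrow> \<not> Orc Q
     \<Longrightarrow> synth_step I C cols tabs jn Orc (P, N) (P, insert Q N)"

definition synth_returns :: "'n \<Rightarrow> 'n \<Rightarrow> 't set \<Rightarrow> 't set \<Rightarrow> 't \<Rightarrow> (('t, 'n, 'h) sketch \<Rightarrow> bool)
    \<Rightarrow> ('t, 'n, 'h) sketch \<Rightarrow> ('t, 'n, 'h) sketch \<Rightarrow> bool" where
  "synth_returns I C cols tabs jn Orc P0 Pf \<longleftrightarrow>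
     (\<exists>Nf. (synth_step I C cols tabs jn Orc)\<^sup>*\<^sup>* (P0, {}) (Pf, Nf) \<and> complete Pf)"

end

theory Submission
  imports Defs
begin

text \<open>The current sketch always refines to the intended program: initially by (i), and
  the sketch is only ever replaced by a question the user accepted, which by (ii) refines to
  it as well. A complete sketch has no holes left to rewrite, so its only refinement is
  itself. Only (i) and the soundness half of (ii) are needed.\<close>

lemma complete_not_derive1:
  assumes "complete P"
  shows "\<not> derive1 G P Q"
proof
  assume "derive1 G P Q"
  then show False
    using assms by cases (auto simp: complete_def)
qed

lemma derives_from_complete:
  assumes "derives G P Q" and "complete P"
  shows "Q = P"
  using assms by (cases rule: converse_rtranclpE) (auto dest: complete_not_derive1)

lemma synth_step_preserves_refinement:
  assumes "synth_step I C cols tabs jn Orc (P, N) (P', N')"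
    and "\<And>Q. Orc Q \<Longrightarrow> derives G Q Pstar"
    and "derives G P Pstar"
  shows "derives G P' Pstar"
  using assms by cases auto

lemma synth_run_preserves_refinement:
  assumes "(synth_step I C cols tabs jn Orc)\<^sup>*\<^sup>* (P, N) (P', N')"
    and "\<And>Q. Orc Q \<Longrightarrow> derives G Q Pstar"
    and "derives G P Pstar"
  shows "derives G P' Pstar"
  using assms(1)
proof (induction rule: rtranclp_induct2)
  case refl
  then show ?case using assms(3) .
next
  case (step P1 N1 P2 N2)
  then show ?case
    using synth_step_preserves_refinement[OF step.hyps(2) assms(2)] by blast
qed

theorem theorem1:
  fixes G :: "('n \<times> ('t, 'n) gsym list) set"
    and S I C :: 'n and cols tabs :: "'t set" and jn :: 't
    and P0 Pstar Pf :: "('t, 'n, 'h) sketch"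
    and Orc :: "('t, 'n, 'h) sketch \<Rightarrow> bool"
  assumes dsl: "I \<noteq> C"
      "\<forall>c\<in>cols. (C, [Tm c]) \<in> G"
      "\<forall>t\<in>tabs. (I, [Tm t]) \<in> G \<and> (I, join_rhs jn t I C) \<in> G"
    and sketch: "\<exists>h0. derives G [Hole S h0] P0"
      "\<forall>A h. Hole A h \<in> set P0 \<longrightarrow> A = I \<or> A = C"
    and true_prog: "derives G [Hole S h0'] Pstar" "complete Pstar"
    and i: "derives G P0 Pstar"
    and ii: "\<forall>Q. Orc Q = derives G Q Pstar"
    and terminates: "synth_returns I C cols tabs jn Orc P0 Pf"
  shows "Pf = Pstar"
proof -
  obtain Nf where run: "(synth_step I C cols tabs jn Orc)\<^sup>*\<^sup>* (P0, {}) (Pf, Nf)"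
    and "complete Pf"
    using terminates unfolding synth_returns_def by blast
  have "derives G Pf Pstar"
    using synth_run_preserves_refinement[OF run] ii i by blast
  then show ?thesis
    using derives_from_complete \<open>complete Pf\<close> by blast
qed

end
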